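(* There exist universal constants $0<\kappa_1<\kappa_2<\infty$ and $c,C>0$ such that the following holds. Let $\{(a_i,b_i,m_i,n_i):i\in\mathbb{Z}\}$ be a positive ABMN solution with battlefield index $k$. Then there exist $A,F\in[\kappa_1,\kappa_2]$ such that for all $j\ge k$, $a_j=(m_k-m_{k-1})\cdot 2F\cdot 2^{2(j-k)}\exp\{-2\cdot 2^{j-k}A\}(1+\varepsilon^{(1)}_j)$, $b_j=(m_k-m_{k-1})\cdot 4F\cdot 2^{2(j-k)}\exp\{-3\cdot 2^{j-k}A\}(1+\varepsilon^{(2)}_j)$, $m_j-m_{j-1}=(m_k-m_{k-1})\cdot F\cdot 2^{2(j-k)}\exp\{-2^{j-k}A\}(1+\varepsilon^{(3)}_j)$, $n_{j-1}-n_j=(m_k-m_{k-1})\cdot 2F\cdot 2^{2(j-k)}\exp\{-2^{j-k+1}A\}(1+\varepsilon^{(4)}_j)$, where $|\varepsilon^{(r)}_j|\le C\exp\{-c\,2^{j-k}\}$ for $r=1,2,3,4$.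
   Context: ABMN system on $\mathbb{Z}$: real variables $a_i,b_i\ge0$, $m_i,n_i$ with, for all $i\in\mathbb{Z}$, $(a_i+b_i)(m_i+a_i)=a_im_{i+1}+b_im_{i-1}$, $(a_i+b_i)(n_i+b_i)=a_in_{i+1}+b_in_{i-1}$, $(a_i+b_i)^2=b_i(m_{i+1}-m_{i-1})$, $(a_i+b_i)^2=a_i(n_{i-1}-n_{i+1})$. A solution is positive if all $a_i,b_i>0$ (then $m_i$ is strictly increasing and $n_i$ strictly decreasing). For such a solution set $\phi_i=\frac{n_{i-1}-n_i}{m_i-m_{i-1}}$; the battlefield index is the unique $k\in\mathbb{Z}$ with $\phi_k\in(1/3,3]$. "Universal" means independent of the solution. *)

theory Defs
  imports "HOL-Analysis.Analysis"
begin

definition ABMN_solution ::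
  "(int \<Rightarrow> real) \<Rightarrow> (int \<Rightarrow> real) \<Rightarrow> (int \<Rightarrow> real) \<Rightarrow> (int \<Rightarrow> real) \<Rightarrow> bool" where
  "ABMN_solution a b m n \<longleftrightarrow>
     (\<forall>i. a i \<ge> 0 \<and> b i \<ge> 0 \<and>
        (a i + b i) * (m i + a i) = a i * m (i + 1) + b i * m (i - 1) \<and>
        (a i + b i) * (n i + b i) = a i * n (i + 1) + b i * n (i - 1) \<and>
        (a i + b i)^2 = b i * (m (i + 1) - m (i - 1)) \<and>
        (a i + b i)^2 = a i * (n (i - 1) - n (i + 1)))"

definition positive_ABMN_solution ::
  "(int \<Rightarrow> real) \<Rightarrow> (int \<Rightarrow> real) \<Rightarrow> (int \<Rightarrow> real) \<Rightarrow> (int \<Rightarrow> real) \<Rightarrow> bool" where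
  "positive_ABMN_solution a b m n \<longleftrightarrow>
     ABMN_solution a b m n \<and> (\<forall>i. a i > 0 \<and> b i > 0)"

definition ABMN_phi :: "(int \<Rightarrow> real) \<Rightarrow> (int \<Rightarrow> real) \<Rightarrow> int \<Rightarrow> real" where
  "ABMN_phi m n i = (n (i - 1) - n i) / (m i - m (i - 1))"

definition battlefield_index ::
  "(int \<Rightarrow> real) \<Rightarrow> (int \<Rightarrow> real) \<Rightarrow> int \<Rightarrow> bool" where
  "battlefield_index m n k \<longleftrightarrow> ABMN_phi m n k \<in> {1/3<..3}"

end

theory Submission imports Defs begin

text \<open>
  With r_i = b_i / a_i the system amounts to the increment identities
  m_{i+1} - m_i = 2 a_i + b_i, m_i - m_{i-1} = a_i^2 / b_i and their duals for n, which give the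
  recursions a_{i+1} = a_i (2 + r_i) r_{i+1} and r_{i+1} (1 + 2 r_{i+1}) (2 + r_i) = r_i^2.
  At the battlefield index phi_k = r_k (2 r_k + 1), so r_k lies in (1/5, 1], and from then on
  the ratio is essentially squared at every step: r_{k+p} <= 2 * 2^(-2^p). Hence
  ln (2 / r_{k+p}) / 2^p and ln a_{k+p} - 2 p ln 2 + 2^(p+1) A converge, to A and L say, with
  increments and therefore tails of order 2^(-2^p) = exp (- ln 2 * 2^p). All four quantities
  of the theorem are monomials in a_j and r_j, so these two expansions yield the claimed ones,
  with F = e^L / (2 (m_k - m_{k-1})).
\<close>

lemma abs_exp_minus_one_le:
  fixes x M :: real
  assumes "\<bar>x\<bar> \<le> M"
  shows "\<bar>exp x - 1\<bar> \<le> exp M * \<bar>x\<bar>"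
proof (cases "x \<ge> 0")
  case True
  have "exp x - 1 \<le> x * exp x"
    using exp_ge_add_one_self[of "-x"] by (simp add: exp_minus field_simps)
  also have "\<dots> \<le> exp M * \<bar>x\<bar>"
    using assms True by (simp add: mult.commute mult_left_mono)
  finally show ?thesis using True by simp
next
  case False
  have "\<bar>exp x - 1\<bar> = 1 - exp x" using False by simp
  also have "\<dots> \<le> \<bar>x\<bar>" using exp_ge_add_one_self[of x] False by linarith
  also have "\<dots> \<le> exp M * \<bar>x\<bar>"
    using mult_right_mono[of 1 "exp M" "\<bar>x\<bar>"] assms by simp
  finally show ?thesis .
qed

lemma power_half_power_two_add_le:
  "(1/2::real) ^ (2 ^ (p + i)) \<le> (1/2) ^ (2 ^ p) * (1/2) ^ i"
proof -
  have "2 ^ p + i \<le> (2::nat) ^ p * (1 + i)"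
    using one_le_power[of 2 p] by (simp add: algebra_simps)
  also have "\<dots> \<le> 2 ^ p * 2 ^ i"
    using Suc_leI[OF less_exp[of i]] by (intro mult_le_mono2) simp
  finally have "2 ^ p + i \<le> (2::nat) ^ p * 2 ^ i" .
  hence "(1/2::real) ^ (2 ^ (p + i)) \<le> (1/2) ^ (2 ^ p + i)"
    by (intro power_decreasing) (auto simp: power_add)
  thus ?thesis by (simp add: power_add)
qed

lemma power_half_power_two_le_half: "(1/2::real) ^ (2 ^ p) \<le> 1/2"
  using power_decreasing[of 1 "2 ^ p" "1/2::real"] by simp

lemma convergent_with_tail_bound:
  fixes X e :: "nat \<Rightarrow> real"
  assumes step: "\<And>p. \<bar>X (Suc p) - X p\<bar> \<le> e p"
    and decay: "\<And>p i. e (p + i) \<le> e p * (1/2) ^ i"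
  shows "\<exists>L. X \<longlonglongrightarrow> L \<and> (\<forall>p. \<bar>X p - L\<bar> \<le> 2 * e p)"
proof -
  define D where "D i = X (Suc i) - X i" for i
  have D_le: "\<bar>D (i + p)\<bar> \<le> e p * (1/2) ^ i" for p i
    using step[of "p + i"] decay[of p i] unfolding D_def by (simp add: add.commute)
  have geometric: "(\<lambda>i. e p * (1/2) ^ i) sums (2 * e p)" for p
    using sums_mult[OF geometric_sums[of "1/2::real"], of "e p"] by (simp add: mult.commute)
  have abs_summable: "summable (\<lambda>i. \<bar>D (i + p)\<bar>)" for p
    by (rule summable_comparison_test'[OF sums_summable[OF geometric]]) (use D_le in simp)
  have "summable (\<lambda>i. \<bar>D i\<bar>)" using abs_summable[of 0] by simp
  hence summable: "summable D" by (rule summable_rabs_cancel)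
  define L where "L = X 0 + suminf D"
  have partial_sums: "X p = X 0 + (\<Sum>i<p. D i)" for p
    unfolding D_def by (simp add: sum_lessThan_telescope)
  have "(\<lambda>p. X 0 + (\<Sum>i<p. D i)) \<longlonglongrightarrow> L"
    unfolding L_def by (intro tendsto_add tendsto_const summable_LIMSEQ summable)
  hence "X \<longlonglongrightarrow> L" by (simp only: partial_sums[symmetric])
  moreover have "\<bar>X p - L\<bar> \<le> 2 * e p" for p
  proof -
    have "L - X p = (\<Sum>i. D (i + p))"
      using suminf_split_initial_segment[OF summable, of p] partial_sums[of p]
      unfolding L_def by linarith
    hence "\<bar>X p - L\<bar> \<le> (\<Sum>i. \<bar>D (i + p)\<bar>)"
      using summable_rabs[OF abs_summable[of p]] by simp
    also have "\<dots> \<le> 2 * e p"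
      using suminf_le[OF D_le abs_summable sums_summable[OF geometric]] sums_unique[OF geometric]
      by simp
    finally show ?thesis .
  qed
  ultimately show ?thesis by blast
qed

lemma three_point_increments:
  fixes \<alpha> \<beta> y\<^sub>0 y\<^sub>1 y\<^sub>2 :: real
  assumes "\<alpha> > 0" "\<beta> > 0"
    and balance: "(\<alpha> + \<beta>) * (y\<^sub>1 + \<alpha>) = \<alpha> * y\<^sub>2 + \<beta> * y\<^sub>0"
    and spread: "(\<alpha> + \<beta>)\<^sup>2 = \<beta> * (y\<^sub>2 - y\<^sub>0)"
  shows "y\<^sub>2 - y\<^sub>1 = 2 * \<alpha> + \<beta>" and "y\<^sub>1 - y\<^sub>0 = \<alpha>\<^sup>2 / \<beta>"
proof -
  have "(\<alpha> + \<beta>) * (y\<^sub>2 - y\<^sub>1) = (\<alpha> + \<beta>) * (2 * \<alpha> + \<beta>)"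
    using balance spread by (simp add: algebra_simps power2_eq_square)
  thus upper: "y\<^sub>2 - y\<^sub>1 = 2 * \<alpha> + \<beta>" using assms(1,2) by simp
  have "\<beta> * (y\<^sub>1 - y\<^sub>0) = \<alpha>\<^sup>2"
    using spread upper by (simp add: algebra_simps power2_eq_square)
  thus "y\<^sub>1 - y\<^sub>0 = \<alpha>\<^sup>2 / \<beta>" using assms(2) by (simp add: field_simps)
qed

lemma positive_ABMN_solutionD:
  assumes "positive_ABMN_solution a b m n"
  shows "a i > 0" "b i > 0"
  using assms unfolding positive_ABMN_solution_def by auto

lemma positive_ABMN_increments:
  assumes sol: "positive_ABMN_solution a b m n"
  shows "m (i + 1) - m i = 2 * a i + b i" "m i - m (i - 1) = (a i)\<^sup>2 / b i"
    and "n (i - 1) - n i = 2 * b i + a i" "n i - n (i + 1) = (b i)\<^sup>2 / a i"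
proof -
  have a: "a i > 0" and b: "b i > 0" using positive_ABMN_solutionD[OF sol] by auto
  from sol have
        "(a i + b i) * (m i + a i) = a i * m (i + 1) + b i * m (i - 1)"
    and "(a i + b i)\<^sup>2 = b i * (m (i + 1) - m (i - 1))"
    and "(b i + a i) * (n i + b i) = b i * n (i - 1) + a i * n (i + 1)"
    and "(b i + a i)\<^sup>2 = a i * (n (i - 1) - n (i + 1))"
    unfolding positive_ABMN_solution_def ABMN_solution_def by (auto simp: algebra_simps)
  \<comment> \<open>the n-equations are the m-equations with a, b swapped and the index reversed\<close>
  from three_point_increments[OF a b this(1,2)] three_point_increments[OF b a this(3,4)]
  show "m (i + 1) - m i = 2 * a i + b i" "m i - m (i - 1) = (a i)\<^sup>2 / b i"
    and "n (i - 1) - n i = 2 * b i + a i" "n i - n (i + 1) = (b i)\<^sup>2 / a i"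
    by auto
qed

lemma positive_ABMN_ratio_recursion:
  assumes sol: "positive_ABMN_solution a b m n"
  defines "r \<equiv> \<lambda>i. b i / a i"
  shows "a (i + 1) = a i * (2 + r i) * r (i + 1)"
    and "r (i + 1) * (1 + 2 * r (i + 1)) * (2 + r i) = (r i)\<^sup>2"
proof -
  note pos = positive_ABMN_solutionD[OF sol]
  note incr = positive_ABMN_increments[OF sol]
  have "(a (i + 1))\<^sup>2 / b (i + 1) = 2 * a i + b i"
    using incr(1)[of i] incr(2)[of "i + 1"] by simp
  thus a_succ: "a (i + 1) = a i * (2 + r i) * r (i + 1)"
    using pos[of i] pos[of "i + 1"] unfolding r_def by (simp add: field_simps power2_eq_square)
  have "a (i + 1) * (1 + 2 * r (i + 1)) = 2 * b (i + 1) + a (i + 1)"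
    using pos[of "i + 1"] unfolding r_def by (simp add: field_simps)
  also have "\<dots> = (b i)\<^sup>2 / a i"
    using incr(3)[of "i + 1"] incr(4)[of i] by simp
  also have "\<dots> = a i * (r i)\<^sup>2"
    using pos[of i] unfolding r_def by (simp add: field_simps power2_eq_square)
  finally have "a i * ((2 + r i) * r (i + 1) * (1 + 2 * r (i + 1))) = a i * (r i)\<^sup>2"
    by (simp add: a_succ mult.assoc)
  hence "(2 + r i) * r (i + 1) * (1 + 2 * r (i + 1)) = (r i)\<^sup>2"
    using pos[of i] by simp
  thus "r (i + 1) * (1 + 2 * r (i + 1)) * (2 + r i) = (r i)\<^sup>2"
    by (simp add: ac_simps)
qed

lemma ABMN_phi_eq_ratio:
  assumes "positive_ABMN_solution a b m n"
  shows "ABMN_phi m n i = b i / a i * (2 * (b i / a i) + 1)"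
  using positive_ABMN_solutionD[OF assms, of i]
  unfolding ABMN_phi_def positive_ABMN_increments[OF assms]
  by (simp add: field_simps power2_eq_square)

lemma battlefield_ratio_bounds:
  assumes "positive_ABMN_solution a b m n" and "battlefield_index m n k"
  shows "1/5 < b k / a k" and "b k / a k \<le> 1"
proof -
  define \<rho> where "\<rho> = b k / a k"
  have "\<rho> > 0" unfolding \<rho>_def using positive_ABMN_solutionD[OF assms(1)] by simp
  have phi: "1/3 < \<rho> * (2 * \<rho> + 1)" "\<rho> * (2 * \<rho> + 1) \<le> 3"
    using assms(2) ABMN_phi_eq_ratio[OF assms(1), of k] unfolding battlefield_index_def \<rho>_def by auto
  show "1/5 < b k / a k"
  proof (rule ccontr)
    assume "\<not> 1/5 < b k / a k"
    hence "\<rho> * (2 * \<rho> + 1) \<le> 1/5 * (7/5)" using \<open>\<rho> > 0\<close> unfolding \<rho>_def[symmetric]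
      by (intro mult_mono) auto
    thus False using phi(1) by simp
  qed
  show "b k / a k \<le> 1"
  proof (rule ccontr)
    assume "\<not> b k / a k \<le> 1"
    hence "1 * 3 < \<rho> * (2 * \<rho> + 1)" unfolding \<rho>_def[symmetric] by (intro mult_strict_mono) auto
    thus False using phi(2) by simp
  qed
qed

text \<open>Here r p stands for the ratio b_{k+p} / a_{k+p} after the battlefield index k.\<close>

locale ABMN_ratio_sequence =
  fixes r :: "nat \<Rightarrow> real"
  assumes pos: "r p > 0"
    and recursion: "r (Suc p) * (1 + 2 * r (Suc p)) * (2 + r p) = (r p)\<^sup>2"
    and start: "r 0 \<le> 1"
begin

lemma succ_le: "r (Suc p) \<le> (r p)\<^sup>2 / 2"
proof -
  have "r (Suc p) \<le> r (Suc p) * (1 + 2 * r (Suc p))" using pos[of "Suc p"] by simp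
  also have "\<dots> = (r p)\<^sup>2 / (2 + r p)" using recursion[of p] pos[of p] by (simp add: field_simps)
  also have "\<dots> \<le> (r p)\<^sup>2 / 2" using pos[of p] by (intro divide_left_mono) auto
  finally show ?thesis .
qed

lemma doubly_exponential_le: "r p \<le> 2 * (1/2) ^ (2 ^ p)"
proof (induction p)
  case 0
  show ?case using start by simp
next
  case (Suc p)
  have "(r p)\<^sup>2 \<le> (2 * (1/2) ^ (2 ^ p))\<^sup>2" using Suc pos[of p] by (intro power_mono) auto
  thus ?case using succ_le[of p] by (simp add: power_mult_distrib power_mult[symmetric] mult.commute)
qed

lemma le_one: "r p \<le> 1"
  using doubly_exponential_le[of p] power_half_power_two_le_half[of p] by simp

lemma log_recursion:
  "ln (2 / r (Suc p)) = 2 * ln (2 / r p) + (ln (1 + r p / 2) + ln (1 + 2 * r (Suc p)))"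
proof -
  have "2 / r (Suc p) = (2 / r p)\<^sup>2 * ((1 + r p / 2) * (1 + 2 * r (Suc p)))"
    using recursion[of p] pos[of p] pos[of "Suc p"]
    by (simp add: field_simps power2_eq_square)
  thus ?thesis using pos[of p] pos[of "Suc p"] by (simp add: ln_mult_pos ln_realpow)
qed

lemma exponent_limit:
  "\<exists>A. ln 2 \<le> A \<and> A \<le> ln (2 / r 0) + 3/2 \<and>
       (\<forall>p. 0 \<le> ln (r p / 2) + 2 ^ p * A \<and> ln (r p / 2) + 2 ^ p * A \<le> 3 * (1/2) ^ (2 ^ p))"
proof -
  define u :: "nat \<Rightarrow> real" where "u p = (1/2) ^ (2 ^ p)" for p
  define h where "h p = ln (1 + r p / 2) + ln (1 + 2 * r (Suc p))" for p
  \<comment> \<open>ln (2 / r p) nearly doubles at each step, with defect h p (see log_recursion)\<close>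
  define X where "X p = ln (2 / r p) / 2 ^ p" for p
  have h_nonneg: "0 \<le> h p" for p unfolding h_def using pos[of p] pos[of "Suc p"] by simp
  have h_le: "h p \<le> 3 * u p" for p
  proof -
    have "h p \<le> r p / 2 + 2 * r (Suc p)"
      unfolding h_def using pos[of p] pos[of "Suc p"] by (intro add_mono ln_add_one_self_le_self) auto
    also have "\<dots> \<le> r p / 2 + r p"
    proof -
      have "r p * r p \<le> r p * 1" using le_one[of p] pos[of p] by (intro mult_left_mono) auto
      thus ?thesis using succ_le[of p] by (simp add: power2_eq_square)
    qed
    also have "\<dots> \<le> 3 * u p" using doubly_exponential_le[of p] unfolding u_def by simp
    finally show ?thesis .
  qed
  have X_step: "X (Suc p) - X p = h p / 2 ^ Suc p" for p
    unfolding X_def log_recursion h_def by (simp add: field_simps)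
  have "\<exists>A. X \<longlonglongrightarrow> A \<and> (\<forall>p. \<bar>X p - A\<bar> \<le> 2 * (3/2 * u p * (1/2) ^ p))"
  proof (rule convergent_with_tail_bound)
    show "\<bar>X (Suc p) - X p\<bar> \<le> 3/2 * u p * (1/2) ^ p" for p
      using h_le[of p] h_nonneg[of p] unfolding X_step by (simp add: field_simps)
    show "3/2 * u (p + i) * (1/2) ^ (p + i) \<le> 3/2 * u p * (1/2) ^ p * (1/2) ^ i" for p i
      using power_half_power_two_add_le[of p i] unfolding u_def by (simp add: power_add)
  qed
  then obtain A where X_lim: "X \<longlonglongrightarrow> A" and X_near: "\<And>p. \<bar>X p - A\<bar> \<le> 3 * u p * (1/2) ^ p"
    by (auto simp: mult.assoc)
  have "incseq X"
  proof (rule incseq_SucI)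
    fix p
    have "0 \<le> h p / 2 ^ Suc p" using h_nonneg[of p] by simp
    thus "X p \<le> X (Suc p)" using X_step[of p] by linarith
  qed
  hence X_le: "X p \<le> A" for p using X_lim by (rule incseq_le)
  have "0 \<le> ln (r p / 2) + 2 ^ p * A \<and> ln (r p / 2) + 2 ^ p * A \<le> 3 * u p" for p
  proof -
    have "ln (r p / 2) + 2 ^ p * A = 2 ^ p * (A - X p)"
      unfolding X_def using pos[of p] by (simp add: ln_div field_simps)
    moreover have "2 ^ p * (A - X p) \<le> 2 ^ p * (3 * u p * (1/2) ^ p)"
      using X_near[of p] by (intro mult_left_mono) auto
    ultimately show ?thesis using X_le[of p] by (simp add: power_one_over)
  qed
  moreover have "ln 2 \<le> A"
  proof -
    have "2 \<le> 2 / r 0" using start pos[of 0] by (simp add: field_simps)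
    thus ?thesis using X_le[of 0] ln_mono[of 2 "2 / r 0"] unfolding X_def by simp
  qed
  moreover have "A \<le> ln (2 / r 0) + 3/2" using X_near[of 0] unfolding X_def u_def abs_diff_le_iff by simp
  ultimately show ?thesis unfolding u_def by blast
qed

lemma amplitude_limit:
  fixes \<alpha> :: "nat \<Rightarrow> real" and A :: real
  assumes \<alpha>_pos: "\<And>p. \<alpha> p > 0"
    and \<alpha>_succ: "\<And>p. \<alpha> (Suc p) = \<alpha> p * (2 + r p) * r (Suc p)"
    and exponent_nonneg: "\<And>p. 0 \<le> ln (r p / 2) + 2 ^ p * A"
    and exponent_le: "\<And>p. ln (r p / 2) + 2 ^ p * A \<le> 3 * (1/2) ^ (2 ^ p)"
  shows "\<exists>L. \<forall>p. \<exists>\<theta>. \<bar>\<theta>\<bar> \<le> 8 * (1/2) ^ (2 ^ p) \<and>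
              \<alpha> p = exp L * (2 ^ p)\<^sup>2 * exp (- 2 * 2 ^ p * A) * exp \<theta>"
proof -
  define u :: "nat \<Rightarrow> real" where "u p = (1/2) ^ (2 ^ p)" for p
  define Y where "Y p = ln (\<alpha> p) - 2 * p * ln 2 + 2 * 2 ^ p * A" for p
  have Y_step: "Y (Suc p) - Y p = ln (1 + r p / 2) + (ln (r (Suc p) / 2) + 2 ^ Suc p * A)" for p
  proof -
    have "\<alpha> (Suc p) = \<alpha> p * (1 + r p / 2) * (r (Suc p) / 2) * 2 * 2" using \<alpha>_succ[of p] by simp
    hence "ln (\<alpha> (Suc p)) = ln (\<alpha> p) + ln (1 + r p / 2) + ln (r (Suc p) / 2) + 2 * ln 2"
      using \<alpha>_pos[of p] pos[of p] pos[of "Suc p"] by (simp add: ln_mult_pos ln_div)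
    thus ?thesis unfolding Y_def by (simp add: algebra_simps)
  qed
  have "\<exists>L. Y \<longlonglongrightarrow> L \<and> (\<forall>p. \<bar>Y p - L\<bar> \<le> 2 * (4 * u p))"
  proof (rule convergent_with_tail_bound)
    show "\<bar>Y (Suc p) - Y p\<bar> \<le> 4 * u p" for p
    proof -
      have "u (Suc p) \<le> u p" unfolding u_def by (rule power_decreasing) auto
      moreover have "ln (1 + r p / 2) \<le> r p / 2" using pos[of p] by (intro ln_add_one_self_le_self) simp
      moreover have "0 \<le> ln (1 + r p / 2)" using pos[of p] by simp
      moreover have "ln (r (Suc p) / 2) + 2 ^ Suc p * A \<le> 3 * u (Suc p)"
        using exponent_le unfolding u_def .
      moreover have "r p \<le> 2 * u p" using doubly_exponential_le unfolding u_def .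
      ultimately show ?thesis using exponent_nonneg[of "Suc p"] unfolding Y_step by linarith
    qed
    show "4 * u (p + i) \<le> 4 * u p * (1/2) ^ i" for p i
      using power_half_power_two_add_le[of p i] unfolding u_def by simp
  qed
  then obtain L where L: "\<And>p. \<bar>Y p - L\<bar> \<le> 8 * u p" by auto
  have two_powers: "exp (2 * real p * ln 2) = (2 ^ p)\<^sup>2" for p
  proof -
    have "exp (real (2 * p) * ln 2) = 2 ^ (2 * p)" by (rule trans[OF exp_of_nat_mult]) simp
    thus ?thesis by (simp add: power_even_eq)
  qed
  have "\<alpha> p = exp L * (2 ^ p)\<^sup>2 * exp (- 2 * 2 ^ p * A) * exp (Y p - L)" for p
  proof -
    have "\<alpha> p = exp (ln (\<alpha> p))" using \<alpha>_pos[of p] by simp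
    also have "ln (\<alpha> p) = L + 2 * real p * ln 2 + (- 2 * 2 ^ p * A) + (Y p - L)"
      unfolding Y_def by simp
    also have "exp \<dots> = exp L * exp (2 * real p * ln 2) * exp (- 2 * 2 ^ p * A) * exp (Y p - L)"
      by (simp only: exp_add)
    finally show ?thesis unfolding two_powers .
  qed
  thus ?thesis using L unfolding u_def by blast
qed

end

lemma asymptotic_constant_bounds:
  fixes \<rho> A \<theta> :: real
  assumes "1/5 < \<rho>" "\<rho> \<le> 1" "ln 2 \<le> A" "A \<le> ln (2 / \<rho>) + 3/2" "\<bar>\<theta>\<bar> \<le> 4"
  shows "A \<in> {exp (-4) / 10..exp 25}" and "\<rho> / 2 * exp (2 * A - \<theta>) \<in> {exp (-4) / 10..exp 25}"
proof -
  have "ln (2 / \<rho>) \<le> 2 / \<rho> - 1" using assms(1) by (intro ln_le_minus_one) simp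
  moreover have "2 / \<rho> \<le> 10" using assms(1) by (simp add: field_simps)
  ultimately have A_le: "A \<le> 21/2" using assms(4) by linarith
  have A_ge: "2/3 \<le> A" using ln2_ge_two_thirds assms(3) by linarith
  have "exp (-4) \<le> (1::real)" "(21/2::real) \<le> exp 25"
    using exp_ge_add_one_self[of 25] by simp_all
  thus "A \<in> {exp (-4) / 10..exp 25}" unfolding atLeastAtMost_iff using A_le A_ge by linarith
  have "1/10 * exp (-4) \<le> \<rho> / 2 * exp (2 * A - \<theta>)"
    using assms(1,5) A_ge by (intro mult_mono) auto
  moreover have "\<rho> / 2 * exp (2 * A - \<theta>) \<le> 1 * exp 25"
    using assms(1,2,5) A_le by (intro mult_mono) auto
  ultimately show "\<rho> / 2 * exp (2 * A - \<theta>) \<in> {exp (-4) / 10..exp 25}" by simp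
qed

lemma positive_ABMN_ratio_sequence:
  assumes sol: "positive_ABMN_solution a b m n" and bf: "battlefield_index m n k"
  defines "r \<equiv> \<lambda>p::nat. b (k + p) / a (k + p)"
  shows "ABMN_ratio_sequence r"
proof
  have succ: "k + int (Suc p) = k + int p + 1" for p by simp
  show "r p > 0" for p unfolding r_def using positive_ABMN_solutionD[OF sol] by simp
  show "r (Suc p) * (1 + 2 * r (Suc p)) * (2 + r p) = (r p)\<^sup>2" for p
    using positive_ABMN_ratio_recursion(2)[OF sol, of "k + int p"] unfolding r_def succ by simp
  show "r 0 \<le> 1" unfolding r_def using battlefield_ratio_bounds(2)[OF sol bf] by simp
qed

lemma positive_ABMN_exponential_form:
  assumes sol: "positive_ABMN_solution a b m n" and bf: "battlefield_index m n k"
  defines "D \<equiv> m k - m (k - 1)"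
  shows "\<exists>A F. A \<in> {exp (-4) / 10..exp 25} \<and> F \<in> {exp (-4) / 10..exp 25} \<and>
           (\<forall>p::nat. \<exists>\<theta> \<eta>. \<bar>\<theta>\<bar> \<le> 8 * (1/2) ^ (2 ^ p) \<and> 0 \<le> \<eta> \<and> \<eta> \<le> 3 * (1/2) ^ (2 ^ p) \<and>
              b (k + p) / a (k + p) \<le> 2 * (1/2) ^ (2 ^ p) \<and>
              a (k + p) = D * (2 * F) * (2 ^ p)\<^sup>2 * exp (- 2 * 2 ^ p * A) * exp \<theta> \<and>
              b (k + p) / a (k + p) = 2 * exp (- (2 ^ p * A)) * exp \<eta>)"
proof -
  define r where "r p = b (k + p) / a (k + p)" for p :: nat
  define \<alpha> where "\<alpha> p = a (k + p)" for p :: nat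
  note positive = positive_ABMN_solutionD[OF sol]
  interpret ABMN_ratio_sequence r
    using positive_ABMN_ratio_sequence[OF sol bf] unfolding r_def[abs_def] .
  obtain A where A_bounds: "ln 2 \<le> A" "A \<le> ln (2 / r 0) + 3/2"
    and exponent: "\<And>p. 0 \<le> ln (r p / 2) + 2 ^ p * A" "\<And>p. ln (r p / 2) + 2 ^ p * A \<le> 3 * (1/2) ^ (2 ^ p)"
    using exponent_limit by blast
  have "\<exists>L. \<forall>p. \<exists>\<theta>. \<bar>\<theta>\<bar> \<le> 8 * (1/2) ^ (2 ^ p) \<and>
              \<alpha> p = exp L * (2 ^ p)\<^sup>2 * exp (- 2 * 2 ^ p * A) * exp \<theta>"
  proof (rule amplitude_limit)
    show "\<alpha> p > 0" for p using positive unfolding \<alpha>_def by simp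
    show "\<alpha> (Suc p) = \<alpha> p * (2 + r p) * r (Suc p)" for p
      using positive_ABMN_ratio_recursion(1)[OF sol, of "k + int p"] unfolding \<alpha>_def r_def
      by (simp add: ac_simps)
  qed (use exponent in auto)
  then obtain L where L: "\<And>p. \<exists>\<theta>. \<bar>\<theta>\<bar> \<le> 8 * (1/2) ^ (2 ^ p) \<and>
                      \<alpha> p = exp L * (2 ^ p)\<^sup>2 * exp (- 2 * 2 ^ p * A) * exp \<theta>"
    by blast
  obtain \<theta>\<^sub>0 where \<theta>\<^sub>0: "\<bar>\<theta>\<^sub>0\<bar> \<le> 4" "\<alpha> 0 = exp L * exp (- 2 * A) * exp \<theta>\<^sub>0"
    using L[of 0] by auto
  define F where "F = exp L / (2 * D)"
  have D_eq: "D = \<alpha> 0 / r 0"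
    using positive_ABMN_increments(2)[OF sol, of k] positive[of k]
    unfolding D_def \<alpha>_def r_def by (simp add: power2_eq_square)
  have "F = r 0 / 2 * (exp L / \<alpha> 0)"
    unfolding F_def D_eq using pos[of 0] positive[of k] by (simp add: \<alpha>_def field_simps)
  also have "exp L / \<alpha> 0 = exp (2 * A - \<theta>\<^sub>0)"
    unfolding \<theta>\<^sub>0(2) by (simp add: exp_diff exp_minus field_simps)
  finally have "F = r 0 / 2 * exp (2 * A - \<theta>\<^sub>0)" .
  moreover have D2F: "D * (2 * F) = exp L"
    unfolding F_def D_eq using pos[of 0] positive[of k] by (simp add: \<alpha>_def)
  ultimately have "A \<in> {exp (-4) / 10..exp 25}" "F \<in> {exp (-4) / 10..exp 25}"
    using asymptotic_constant_bounds[OF _ start A_bounds \<theta>\<^sub>0(1)] battlefield_ratio_bounds(1)[OF sol bf]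
    by (simp_all add: r_def)
  moreover have "\<exists>\<theta> \<eta>. \<bar>\<theta>\<bar> \<le> 8 * (1/2) ^ (2 ^ p) \<and> 0 \<le> \<eta> \<and> \<eta> \<le> 3 * (1/2) ^ (2 ^ p) \<and>
              r p \<le> 2 * (1/2) ^ (2 ^ p) \<and>
              \<alpha> p = D * (2 * F) * (2 ^ p)\<^sup>2 * exp (- 2 * 2 ^ p * A) * exp \<theta> \<and>
              r p = 2 * exp (- (2 ^ p * A)) * exp \<eta>" for p
  proof -
    have "r p = 2 * exp (- (2 ^ p * A)) * exp (ln (r p / 2) + 2 ^ p * A)"
      using pos[of p] by (simp add: exp_add exp_minus)
    thus ?thesis using L[of p] exponent[of p] doubly_exponential_le[of p] unfolding D2F by blast
  qed
  ultimately show ?thesis unfolding r_def \<alpha>_def by blast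
qed

lemma relative_error_forms:
  fixes \<alpha> \<rho> D F t A \<theta> \<eta> u :: real
  assumes \<alpha>: "\<alpha> = D * (2 * F) * t\<^sup>2 * exp (- 2 * t * A) * exp \<theta>"
    and \<rho>: "\<rho> = 2 * exp (- (t * A)) * exp \<eta>"
    and \<theta>_le: "\<bar>\<theta>\<bar> \<le> 8 * u" and \<eta>_bounds: "0 \<le> \<eta>" "\<eta> \<le> 3 * u"
    and \<rho>_le: "\<rho> \<le> 2 * u" and u_le: "u \<le> 1/2"
  shows "\<exists>\<epsilon>. \<bar>\<epsilon>\<bar> \<le> 12 * exp 6 * u \<and> \<alpha> = D * (2 * F) * t\<^sup>2 * exp (- 2 * t * A) * (1 + \<epsilon>)"
    and "\<exists>\<epsilon>. \<bar>\<epsilon>\<bar> \<le> 12 * exp 6 * u \<and> \<alpha> * \<rho> = D * (4 * F) * t\<^sup>2 * exp (- 3 * t * A) * (1 + \<epsilon>)"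
    and "\<exists>\<epsilon>. \<bar>\<epsilon>\<bar> \<le> 12 * exp 6 * u \<and> \<alpha> / \<rho> = D * F * t\<^sup>2 * exp (- t * A) * (1 + \<epsilon>)"
    and "\<exists>\<epsilon>. \<bar>\<epsilon>\<bar> \<le> 12 * exp 6 * u \<and>
           \<alpha> * (1 + 2 * \<rho>) = D * (2 * F) * t\<^sup>2 * exp (- 2 * t * A) * (1 + \<epsilon>)"
proof -
  have small: "\<bar>exp x - 1\<bar> \<le> 12 * exp 6 * u" if "\<bar>x\<bar> \<le> 11 * u" for x
  proof -
    have "\<bar>exp x - 1\<bar> \<le> exp 6 * \<bar>x\<bar>" using that u_le by (intro abs_exp_minus_one_le) simp
    also have "\<dots> \<le> exp 6 * (12 * u)" using that \<theta>_le by (intro mult_left_mono) auto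
    finally show ?thesis by simp
  qed
  have exp_3: "exp (- 2 * t * A) * exp (- (t * A)) = exp (- 3 * t * A)"
    and exp_1: "exp (- 2 * t * A) / exp (- (t * A)) = exp (- t * A)"
    by (simp_all add: exp_add[symmetric] exp_diff[symmetric] algebra_simps)
  show "\<exists>\<epsilon>. \<bar>\<epsilon>\<bar> \<le> 12 * exp 6 * u \<and> \<alpha> = D * (2 * F) * t\<^sup>2 * exp (- 2 * t * A) * (1 + \<epsilon>)"
    using small[of \<theta>] \<theta>_le \<alpha> by (intro exI[of _ "exp \<theta> - 1"]) simp
  show "\<exists>\<epsilon>. \<bar>\<epsilon>\<bar> \<le> 12 * exp 6 * u \<and> \<alpha> * \<rho> = D * (4 * F) * t\<^sup>2 * exp (- 3 * t * A) * (1 + \<epsilon>)"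
  proof (intro exI conjI)
    show "\<bar>exp (\<theta> + \<eta>) - 1\<bar> \<le> 12 * exp 6 * u" using \<theta>_le \<eta>_bounds by (intro small) simp
    show "\<alpha> * \<rho> = D * (4 * F) * t\<^sup>2 * exp (- 3 * t * A) * (1 + (exp (\<theta> + \<eta>) - 1))"
      unfolding \<alpha> \<rho> exp_3[symmetric] by (simp add: exp_add)
  qed
  show "\<exists>\<epsilon>. \<bar>\<epsilon>\<bar> \<le> 12 * exp 6 * u \<and> \<alpha> / \<rho> = D * F * t\<^sup>2 * exp (- t * A) * (1 + \<epsilon>)"
  proof (intro exI conjI)
    show "\<bar>exp (\<theta> - \<eta>) - 1\<bar> \<le> 12 * exp 6 * u" using \<theta>_le \<eta>_bounds by (intro small) simp
    show "\<alpha> / \<rho> = D * F * t\<^sup>2 * exp (- t * A) * (1 + (exp (\<theta> - \<eta>) - 1))"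
      unfolding \<alpha> \<rho> exp_1[symmetric] by (simp add: exp_diff)
  qed
  show "\<exists>\<epsilon>. \<bar>\<epsilon>\<bar> \<le> 12 * exp 6 * u \<and>
          \<alpha> * (1 + 2 * \<rho>) = D * (2 * F) * t\<^sup>2 * exp (- 2 * t * A) * (1 + \<epsilon>)"
  proof (intro exI conjI)
    have "\<bar>exp \<theta> - 1\<bar> \<le> exp 6 * \<bar>\<theta>\<bar>" using \<theta>_le u_le by (intro abs_exp_minus_one_le) simp
    also have "\<dots> \<le> exp 6 * (8 * u)" using \<theta>_le by (intro mult_left_mono) auto
    finally have "\<bar>exp \<theta> - 1\<bar> \<le> exp 6 * (8 * u)" .
    moreover have "2 * \<rho> * exp \<theta> \<le> 2 * (2 * u) * exp 6"
      using \<rho>_le \<theta>_le u_le \<rho> by (intro mult_mono) auto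
    moreover have "0 \<le> 2 * \<rho> * exp \<theta>" using \<rho> by simp
    ultimately show "\<bar>exp \<theta> * (1 + 2 * \<rho>) - 1\<bar> \<le> 12 * exp 6 * u"
      by (simp add: abs_le_iff algebra_simps)
    show "\<alpha> * (1 + 2 * \<rho>) = D * (2 * F) * t\<^sup>2 * exp (- 2 * t * A) * (1 + (exp \<theta> * (1 + 2 * \<rho>) - 1))"
      unfolding \<alpha> by simp
  qed
qed

lemma exp_neg_ln2_mult_power: "exp (- ln 2 * 2 ^ p) = (1/2::real) ^ (2 ^ p)"
proof -
  have "exp (- ln 2 * 2 ^ p) = exp (real (2 ^ p) * (- ln 2))" by (simp add: mult.commute)
  also have "\<dots> = exp (- ln 2) ^ (2 ^ p)" by (rule exp_of_nat_mult)
  finally show ?thesis by (simp add: exp_minus inverse_eq_divide)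
qed

lemma positive_ABMN_asymptotics:
  assumes sol: "positive_ABMN_solution a b m n" and bf: "battlefield_index m n k"
  shows "\<exists>A F. A \<in> {exp (-4) / 10..exp 25} \<and> F \<in> {exp (-4) / 10..exp 25} \<and>
          (\<forall>j\<ge>k. let D = m k - m (k - 1); t = (2::real) ^ nat (j - k);
                       bd = 12 * exp 6 * exp (- ln 2 * t) in
             (\<exists>\<epsilon>. \<bar>\<epsilon>\<bar> \<le> bd \<and> a j = D * (2 * F) * t^2 * exp (- 2 * t * A) * (1 + \<epsilon>)) \<and>
             (\<exists>\<epsilon>. \<bar>\<epsilon>\<bar> \<le> bd \<and> b j = D * (4 * F) * t^2 * exp (- 3 * t * A) * (1 + \<epsilon>)) \<and>
             (\<exists>\<epsilon>. \<bar>\<epsilon>\<bar> \<le> bd \<and> m j - m (j - 1) = D * F * t^2 * exp (- t * A) * (1 + \<epsilon>)) \<and>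
             (\<exists>\<epsilon>. \<bar>\<epsilon>\<bar> \<le> bd \<and> n (j - 1) - n j = D * (2 * F) * t^2 * exp (- 2 * t * A) * (1 + \<epsilon>)))"
proof -
  obtain A F where bounds: "A \<in> {exp (-4) / 10..exp 25}" "F \<in> {exp (-4) / 10..exp 25}"
    and form: "\<And>p::nat. \<exists>\<theta> \<eta>. \<bar>\<theta>\<bar> \<le> 8 * (1/2) ^ (2 ^ p) \<and> 0 \<le> \<eta> \<and> \<eta> \<le> 3 * (1/2) ^ (2 ^ p) \<and>
              b (k + p) / a (k + p) \<le> 2 * (1/2) ^ (2 ^ p) \<and>
              a (k + p) = (m k - m (k - 1)) * (2 * F) * (2 ^ p)\<^sup>2 * exp (- 2 * 2 ^ p * A) * exp \<theta> \<and>
              b (k + p) / a (k + p) = 2 * exp (- (2 ^ p * A)) * exp \<eta>"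
    using positive_ABMN_exponential_form[OF sol bf] by blast
  show ?thesis
  proof (rule exI[of _ A], rule exI[of _ F], intro conjI allI impI, goal_cases)
    case 1
    show ?case by (fact bounds(1))
  next
    case 2
    show ?case by (fact bounds(2))
  next
    case (3 j)
    define p where "p = nat (j - k)"
    define \<rho> where "\<rho> = b j / a j"
    have j: "j = k + int p" using 3 unfolding p_def by simp
    obtain \<theta> \<eta> where "\<bar>\<theta>\<bar> \<le> 8 * (1/2) ^ (2 ^ p)" "0 \<le> \<eta>" "\<eta> \<le> 3 * (1/2) ^ (2 ^ p)"
      "\<rho> \<le> 2 * (1/2) ^ (2 ^ p)"
      "a j = (m k - m (k - 1)) * (2 * F) * (2 ^ p)\<^sup>2 * exp (- 2 * 2 ^ p * A) * exp \<theta>"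
      "\<rho> = 2 * exp (- (2 ^ p * A)) * exp \<eta>"
      using form[of p] unfolding j \<rho>_def by blast
    note errors = relative_error_forms[OF this(5,6,1,2,3,4) power_half_power_two_le_half]
    have "a j > 0" using positive_ABMN_solutionD[OF sol] by simp
    hence "b j = a j * \<rho>" "m j - m (j - 1) = a j / \<rho>" "n (j - 1) - n j = a j * (1 + 2 * \<rho>)"
      using positive_ABMN_increments(2,3)[OF sol, of j]
      unfolding \<rho>_def by (simp_all add: field_simps power2_eq_square)
    thus ?case using errors unfolding Let_def p_def[symmetric] exp_neg_ln2_mult_power by simp
  qed
qed

theorem mainTheorem6:
  "\<exists>\<kappa>1 \<kappa>2 c C :: real. 0 < \<kappa>1 \<and> \<kappa>1 < \<kappa>2 \<and> c > 0 \<and> C > 0 \<and>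
     (\<forall>a b m n k. positive_ABMN_solution a b m n \<and> battlefield_index m n k \<longrightarrow>
        (\<exists>A F. A \<in> {\<kappa>1..\<kappa>2} \<and> F \<in> {\<kappa>1..\<kappa>2} \<and>
          (\<forall>j\<ge>k. let D = m k - m (k - 1); t = (2::real) ^ nat (j - k);
                       bd = C * exp (- c * t) in
             (\<exists>\<epsilon>. \<bar>\<epsilon>\<bar> \<le> bd \<and> a j = D * (2 * F) * t^2 * exp (- 2 * t * A) * (1 + \<epsilon>)) \<and>
             (\<exists>\<epsilon>. \<bar>\<epsilon>\<bar> \<le> bd \<and> b j = D * (4 * F) * t^2 * exp (- 3 * t * A) * (1 + \<epsilon>)) \<and>
             (\<exists>\<epsilon>. \<bar>\<epsilon>\<bar> \<le> bd \<and> m j - m (j - 1) = D * F * t^2 * exp (- t * A) * (1 + \<epsilon>)) \<and>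
             (\<exists>\<epsilon>. \<bar>\<epsilon>\<bar> \<le> bd \<and> n (j - 1) - n j = D * (2 * F) * t^2 * exp (- 2 * t * A) * (1 + \<epsilon>)))))"
proof (rule exI[of _ "exp (-4) / 10"], rule exI[of _ "exp 25"], rule exI[of _ "ln 2"],
    rule exI[of _ "12 * exp 6"], intro conjI allI impI)
  have "exp (-4) / 10 < exp (-4::real)" by simp
  also have "\<dots> < exp 25" by simp
  finally show "exp (-4) / 10 < exp (25::real)" .
qed (use positive_ABMN_asymptotics in auto)

end
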